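(* Let $\eta\in(0,1)$, $T\ge 1$, and let $\ell_1,\dots,\ell_T\in[-1,1]^K$ be an arbitrary loss sequence fixed in advance. Then LB-Prod (defined in the context) produces, at every round $t$, a probability vector $\pi_t$ in the simplex with all entries strictly positive, and for every $i^*\in[K]$, $$\sum_{t=1}^T\mathbb{E}\big[\ell_{t,A_t}-\ell_{t,i^*}\big]\le 2+\frac{K\log T}{\eta}+\frac{2\eta T}{1-\eta}.$$
   Context: Bandit setting: in each round $t$ the learner picks $A_t\in[K]$ and observes only $\ell_{t,A_t}$; expectations are over the learner's randomness. LB-Prod with parameter $\eta\in(0,1)$: set $\pi_{1,i}=1/K$. In round $t$: draw $A_t\sim\pi_t$, observe $\ell_{t,A_t}$; set $\tilde\ell_{t,i}=\ell_{t,i}\mathbb{I}(A_t=i)$; $$\lambda_{t,i}=\frac{\pi_{t,i}\sum_{j=1}^K\pi_{t,j}\tilde\ell_{t,j}}{\sum_{j=1}^K\pi_{t,j}^2}=\frac{\pi_{t,i}\pi_{t,A_t}\ell_{t,A_t}}{\sum_{j=1}^K\pi_{t,j}^2};$$ and update $\pi_{t+1,i}=\pi_{t,i}\big(1-\eta(\tilde\ell_{t,i}-\lambda_{t,i})\big)$ for all $i\in[K]$. *)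

theory Defs
  imports Complex_Main
begin

text \<open>Arms are 0..K-1 (i.e. the set {..<K}); rounds are 1..T; the loss of arm i in
round t is l t i. A history is the list of past actions, MOST RECENT FIRST;
a history h of length t-1 determines the LB-Prod weights pi_t.\<close>

primrec lbprod :: "(nat \<Rightarrow> nat \<Rightarrow> real) \<Rightarrow> real \<Rightarrow> nat \<Rightarrow> nat list \<Rightarrow> nat \<Rightarrow> real" where
  "lbprod l \<eta> K [] = (\<lambda>i. 1 / real K)"
| "lbprod l \<eta> K (a # h) =
     (let p = lbprod l \<eta> K h;
          t = length h + 1;
          lt = (\<lambda>i. if i = a then l t a else 0);
          lam = (\<lambda>i. p i * p a * l t a / (\<Sum>j<K. (p j)\<^sup>2))
      in (\<lambda>i. p i * (1 - \<eta> * (lt i - lam i))))"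

primrec hist_prob :: "(nat \<Rightarrow> nat \<Rightarrow> real) \<Rightarrow> real \<Rightarrow> nat \<Rightarrow> nat list \<Rightarrow> real" where
  "hist_prob l \<eta> K [] = 1"
| "hist_prob l \<eta> K (a # h) = hist_prob l \<eta> K h * lbprod l \<eta> K h a"

definition histories :: "nat \<Rightarrow> nat \<Rightarrow> nat list set" where
  "histories K n = {h. set h \<subseteq> {..<K} \<and> length h = n}"

definition exp_regret_round :: "(nat \<Rightarrow> nat \<Rightarrow> real) \<Rightarrow> real \<Rightarrow> nat \<Rightarrow> nat \<Rightarrow> nat \<Rightarrow> real" where
  "exp_regret_round l \<eta> K t istar =
     (\<Sum>h\<in>histories K (t - 1). \<Sum>a<K.
        hist_prob l \<eta> K h * lbprod l \<eta> K h a * (l t a - l t istar))"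

end

theory Submission
  imports Defs
begin

text \<open>For a comparator distribution \<open>u\<close> we follow the potential
  \<open>\<Sum>i. u i / \<pi>\<^sub>t i + ln (\<pi>\<^sub>t i)\<close>. Each LB-Prod step multiplies \<open>\<pi>\<^sub>t i\<close> by \<open>1 - \<eta> x\<^sub>i\<close> with
  \<open>\<bar>x\<^sub>i\<bar> \<le> 1\<close>, and the correction \<open>\<lambda>\<close> makes \<open>\<Sum>i. \<pi>\<^sub>t i x\<^sub>i = 0\<close>, so the weights stay a positive
  probability vector. Expanding \<open>ln (1 - y) \<le> -y\<close> and \<open>1/(1 - y)\<close> to second order, the expected
  decrease of the potential over \<open>A\<^sub>t \<sim> \<pi>\<^sub>t\<close> is at least \<open>\<eta>\<close> times the instantaneous regret
  against \<open>u\<close>, minus \<open>2 \<eta>\<^sup>2 / (1 - \<eta>)\<close>; the second-order term is controlled by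
  \<open>\<pi>\<^sub>i \<pi>\<^sub>a \<le> \<Sum>j. \<pi>\<^sub>j\<^sup>2\<close>. Telescoping over \<open>T\<close> rounds with \<open>u\<close> the point mass at \<open>i\<^sup>*\<close> smoothed by
  weight \<open>1/T\<close> towards uniform bounds the total decrease by \<open>K ln T\<close> and costs at most \<open>2\<close>
  in comparator loss.\<close>

definition lb_update :: "real \<Rightarrow> nat \<Rightarrow> (nat \<Rightarrow> real) \<Rightarrow> nat \<Rightarrow> real \<Rightarrow> nat \<Rightarrow> real" where
  "lb_update \<eta> K p a c i =
     p i * (1 - \<eta> * ((if i = a then c else 0) - p i * p a * c / (\<Sum>j<K. (p j)\<^sup>2)))"

lemma lbprod_Cons:
  "lbprod l \<eta> K (a # h) = lb_update \<eta> K (lbprod l \<eta> K h) a (l (Suc (length h)) a)"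
  by (simp add: lb_update_def Let_def fun_eq_iff)

text \<open>Up to the term \<open>K + (\<Sum>i<K. ln (u i))\<close>, which does not depend on \<open>p\<close>, this is the
  Bregman divergence from \<open>u\<close> to \<open>p\<close> of the log-barrier \<open>- (\<Sum>i<K. ln (p i))\<close>.\<close>
definition log_barrier_potential :: "nat \<Rightarrow> (nat \<Rightarrow> real) \<Rightarrow> (nat \<Rightarrow> real) \<Rightarrow> real" where
  "log_barrier_potential K u p = (\<Sum>i<K. u i / p i + ln (p i))"

lemma log_barrier_potential_ge:
  assumes "\<forall>i<K. 0 < p i" and "\<forall>i<K. 0 < u i"
  shows "(\<Sum>i<K. 1 + ln (u i)) \<le> log_barrier_potential K u p"
  unfolding log_barrier_potential_def
proof (rule sum_mono)
  fix i assume "i \<in> {..<K}"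
  with assms have p: "0 < p i" and u: "0 < u i" by auto
  have "ln (u i) - ln (p i) = ln (u i / p i)" using p u by (simp add: ln_div)
  also have "\<dots> \<le> u i / p i - 1" using p u by (intro ln_le_minus_one) simp
  finally show "1 + ln (u i) \<le> u i / p i + ln (p i)" by simp
qed

lemma inverse_one_minus_le:
  fixes \<eta> y :: real
  assumes "\<eta> < 1" and "\<bar>y\<bar> \<le> \<eta>"
  shows "1 / (1 - y) \<le> 1 + y + y\<^sup>2 / (1 - \<eta>)"
proof -
  have "1 - \<eta> \<le> 1 - y" and "0 < 1 - \<eta>" using assms by auto
  then have "y\<^sup>2 / (1 - y) \<le> y\<^sup>2 / (1 - \<eta>)" by (intro divide_left_mono) auto
  moreover have "1 / (1 - y) = 1 + y + y\<^sup>2 / (1 - y)"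
    using \<open>1 - \<eta> \<le> 1 - y\<close> \<open>0 < 1 - \<eta>\<close> by (simp add: field_simps power2_eq_square)
  ultimately show ?thesis by simp
qed

lemma potential_term_update_le:
  fixes \<eta> p u x :: real
  assumes "0 < \<eta>" "\<eta> < 1" "0 < p" "0 \<le> u" "\<bar>x\<bar> \<le> 1"
  shows "u / (p * (1 - \<eta> * x)) + ln (p * (1 - \<eta> * x))
           \<le> u / p + ln p + \<eta> * (u * x / p - x) + \<eta>\<^sup>2 / (1 - \<eta>) * (u * x\<^sup>2 / p)"
proof -
  have y: "\<bar>\<eta> * x\<bar> \<le> \<eta>" using assms by (simp add: abs_mult mult_left_le)
  then have pos: "0 < 1 - \<eta> * x" using assms by linarith
  have "ln (p * (1 - \<eta> * x)) \<le> ln p - \<eta> * x"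
    using ln_le_minus_one[OF pos] assms pos by (simp add: ln_mult)
  moreover have "u / (p * (1 - \<eta> * x)) = u / p * (1 / (1 - \<eta> * x))" by simp
  moreover have "\<dots> \<le> u / p * (1 + \<eta> * x + (\<eta> * x)\<^sup>2 / (1 - \<eta>))"
    using inverse_one_minus_le[OF \<open>\<eta> < 1\<close> y] assms by (intro mult_left_mono) auto
  moreover have "u / p * (1 + \<eta> * x + (\<eta> * x)\<^sup>2 / (1 - \<eta>))
      = u / p + \<eta> * (u * x / p) + \<eta>\<^sup>2 / (1 - \<eta>) * (u * x\<^sup>2 / p)"
    using assms by (simp add: field_simps power_mult_distrib)
  ultimately show ?thesis by (simp add: algebra_simps)
qed

lemma sum_squares_pos:
  fixes p :: "nat \<Rightarrow> real"
  assumes "a < K" and "p a \<noteq> 0"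
  shows "0 < (\<Sum>j<K. (p j)\<^sup>2)"
proof -
  have "(p a)\<^sup>2 \<le> (\<Sum>j<K. (p j)\<^sup>2)" using assms by (intro member_le_sum) auto
  then show ?thesis using assms by (smt (verit) zero_less_power2)
qed

lemma abs_mult_le_sum_squares:
  fixes p :: "nat \<Rightarrow> real"
  assumes "i < K" "j < K" "i \<noteq> j"
  shows "2 * \<bar>p i * p j\<bar> \<le> (\<Sum>k<K. (p k)\<^sup>2)"
proof -
  have "2 * \<bar>p i * p j\<bar> \<le> (p i)\<^sup>2 + (p j)\<^sup>2"
    using sum_squares_bound[of "\<bar>p i\<bar>" "\<bar>p j\<bar>"] by (simp add: abs_mult mult.assoc)
  also have "\<dots> = (\<Sum>k\<in>{i, j}. (p k)\<^sup>2)" using assms by simp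
  also have "\<dots> \<le> (\<Sum>k<K. (p k)\<^sup>2)" using assms by (intro sum_mono2) auto
  finally show ?thesis .
qed

lemma mult_le_sum_squares:
  fixes p :: "nat \<Rightarrow> real"
  assumes "i < K" "j < K"
  shows "p i * p j \<le> (\<Sum>k<K. (p k)\<^sup>2)"
proof (cases "i = j")
  case True
  then show ?thesis using assms member_le_sum[of i "{..<K}" "\<lambda>k. (p k)\<^sup>2"]
    by (simp add: power2_eq_square)
next
  case False
  then show ?thesis using abs_mult_le_sum_squares[OF assms False, of p] by linarith
qed

lemma lb_update_exponent_bounded:
  fixes p :: "nat \<Rightarrow> real"
  assumes "\<forall>j<K. 0 < p j" and "\<bar>c\<bar> \<le> 1" and "a < K" and "i < K"
  shows "\<bar>(if i = a then c else 0) - p i * p a * c / (\<Sum>j<K. (p j)\<^sup>2)\<bar> \<le> 1"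
proof -
  define S where "S = (\<Sum>j<K. (p j)\<^sup>2)"
  have S: "0 < S" unfolding S_def using assms by (intro sum_squares_pos[of a]) auto
  show ?thesis
  proof (cases "i = a")
    case True
    have "(p a)\<^sup>2 \<le> S" unfolding S_def using assms by (intro member_le_sum) auto
    then have r: "0 \<le> 1 - (p a)\<^sup>2 / S" "1 - (p a)\<^sup>2 / S \<le> 1" using S by auto
    have "c - p a * p a * c / S = c * (1 - (p a)\<^sup>2 / S)"
      using S by (simp add: field_simps power2_eq_square)
    then have "\<bar>c - p a * p a * c / S\<bar> = \<bar>c\<bar> * (1 - (p a)\<^sup>2 / S)"
      using r by (simp add: abs_mult)
    also have "\<dots> \<le> 1" using r assms by (simp add: mult_le_one)
    finally show ?thesis using True by (simp add: S_def)
  next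
    case False
    have "\<bar>p i * p a * c / S\<bar> \<le> \<bar>p i * p a\<bar> / S"
      using S assms by (simp add: abs_mult divide_right_mono mult_left_le)
    also have "\<dots> \<le> 1" using abs_mult_le_sum_squares[of i K a p] assms False S
      by (simp add: S_def)
    finally show ?thesis using False by (simp add: S_def)
  qed
qed

lemma lb_update_pos:
  assumes "0 < \<eta>" "\<eta> < 1" "\<forall>j<K. 0 < p j" "\<bar>c\<bar> \<le> 1" "a < K" "i < K"
  shows "0 < lb_update \<eta> K p a c i"
proof -
  define x where "x = (if i = a then c else 0) - p i * p a * c / (\<Sum>j<K. (p j)\<^sup>2)"
  have "\<bar>x\<bar> \<le> 1" unfolding x_def using lb_update_exponent_bounded assms by blast
  then have "\<eta> * x < 1" using assms by (smt (verit) abs_le_D1 mult_left_le)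
  then show ?thesis using assms unfolding lb_update_def x_def[symmetric] by simp
qed

lemma sum_lb_update:
  assumes "\<forall>j<K. 0 < p j" "(\<Sum>j<K. p j) = 1" "a < K"
  shows "(\<Sum>i<K. lb_update \<eta> K p a c i) = 1"
proof -
  define S where "S = (\<Sum>j<K. (p j)\<^sup>2)"
  define m where "m = p a * c / S"
  have "0 < S" unfolding S_def using assms by (intro sum_squares_pos[of a]) auto
  have "lb_update \<eta> K p a c i = p i - \<eta> * ((if i = a then p a * c else 0) - m * (p i)\<^sup>2)" for i
    unfolding lb_update_def S_def[symmetric] m_def by (simp add: algebra_simps power2_eq_square)
  then have "(\<Sum>i<K. lb_update \<eta> K p a c i)
      = (\<Sum>i<K. p i) - \<eta> * (\<Sum>i<K. (if i = a then p a * c else 0) - m * (p i)\<^sup>2)"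
    by (simp add: sum_subtractf flip: sum_distrib_left)
  also have "\<dots> = (\<Sum>i<K. p i) - \<eta> * (p a * c - m * S)"
    using assms by (simp add: sum_subtractf sum_distrib_left S_def)
  also have "\<dots> = 1" using assms \<open>0 < S\<close> by (simp add: m_def)
  finally show ?thesis .
qed

lemma lb_update_potential_le:
  assumes "0 < \<eta>" "\<eta> < 1" "\<forall>j<K. 0 < p j" "(\<Sum>j<K. p j) = 1" "\<bar>c\<bar> \<le> 1"
    and "\<forall>j<K. 0 \<le> u j" "(\<Sum>j<K. u j) = 1" "a < K"
  shows "log_barrier_potential K u (lb_update \<eta> K p a c)
      \<le> log_barrier_potential K u p + \<eta> * (u a * c / p a - c)
        + \<eta>\<^sup>2 / (1 - \<eta>) * (u a / p a + (p a * c / (\<Sum>j<K. (p j)\<^sup>2))\<^sup>2 * (\<Sum>i<K. u i * p i))"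
proof -
  define S where "S = (\<Sum>j<K. (p j)\<^sup>2)"
  define m where "m = p a * c / S"
  define x where "x i = (if i = a then c else 0) - p i * m" for i
  define C where "C = \<eta>\<^sup>2 / (1 - \<eta>)"
  have "0 < S" unfolding S_def using assms by (intro sum_squares_pos[of a]) auto
  have "0 < p a" "0 \<le> C" using assms by (auto simp: C_def)
  have q: "lb_update \<eta> K p a c i = p i * (1 - \<eta> * x i)" for i
    by (simp add: lb_update_def x_def m_def S_def)
  have x_bounded: "\<bar>x i\<bar> \<le> 1" if "i < K" for i
    using lb_update_exponent_bounded[of K p c a i] assms that by (simp add: x_def m_def S_def)
  have "(\<Sum>i<K. u i * x i / p i) = (\<Sum>i<K. (if i = a then u a * c / p a else 0) - m * u i)"
    using assms by (intro sum.cong) (auto simp: x_def field_simps)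
  moreover have "(\<Sum>i<K. x i) = (\<Sum>i<K. (if i = a then c else 0) - m * p i)"
    by (simp add: x_def mult.commute)
  ultimately have linear: "(\<Sum>i<K. u i * x i / p i - x i) = u a * c / p a - c"
    using assms by (simp add: sum_subtractf flip: sum_distrib_left)
  have "(\<Sum>i<K. u i * (x i)\<^sup>2 / p i) \<le> (\<Sum>i<K. (if i = a then u a / p a else 0) + m\<^sup>2 * (u i * p i))"
  proof (rule sum_mono)
    fix i assume "i \<in> {..<K}"
    then have "0 < p i" "0 \<le> u i" "(x i)\<^sup>2 \<le> 1"
      using assms x_bounded by (auto simp: abs_square_le_1)
    show "u i * (x i)\<^sup>2 / p i \<le> (if i = a then u a / p a else 0) + m\<^sup>2 * (u i * p i)"
    proof (cases "i = a")
      case True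
      have "u a * (x a)\<^sup>2 / p a \<le> u a / p a"
        using \<open>0 < p i\<close> \<open>0 \<le> u i\<close> \<open>(x i)\<^sup>2 \<le> 1\<close> True
        by (simp add: divide_right_mono mult_left_le)
      then show ?thesis using True \<open>0 < p i\<close> \<open>0 \<le> u i\<close> by (simp add: add_increasing2)
    next
      case False
      then show ?thesis using \<open>0 < p i\<close> by (simp add: x_def power2_eq_square)
    qed
  qed
  then have quadratic: "(\<Sum>i<K. u i * (x i)\<^sup>2 / p i) \<le> u a / p a + m\<^sup>2 * (\<Sum>i<K. u i * p i)"
    using assms by (simp add: sum.distrib sum_distrib_left)
  have "log_barrier_potential K u (lb_update \<eta> K p a c)
      \<le> (\<Sum>i<K. u i / p i + ln (p i) + \<eta> * (u i * x i / p i - x i) + C * (u i * (x i)\<^sup>2 / p i))"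
    unfolding log_barrier_potential_def q C_def
    using assms x_bounded by (intro sum_mono potential_term_update_le) auto
  also have "\<dots> = log_barrier_potential K u p + \<eta> * (\<Sum>i<K. u i * x i / p i - x i)
      + C * (\<Sum>i<K. u i * (x i)\<^sup>2 / p i)"
    by (simp add: log_barrier_potential_def sum.distrib sum_distrib_left)
  also have "\<dots> \<le> log_barrier_potential K u p + \<eta> * (u a * c / p a - c)
      + C * (u a / p a + m\<^sup>2 * (\<Sum>i<K. u i * p i))"
    using linear quadratic \<open>0 \<le> C\<close> by (simp add: mult_left_mono)
  finally show ?thesis by (simp add: C_def m_def S_def)
qed

lemma variance_term_le_one:
  fixes p c u :: "nat \<Rightarrow> real"
  assumes "\<forall>j<K. 0 < p j" "\<forall>j<K. \<bar>c j\<bar> \<le> 1" "\<forall>j<K. 0 \<le> u j" "(\<Sum>j<K. u j) = 1"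
  shows "(\<Sum>a<K. p a * (p a * c a / (\<Sum>j<K. (p j)\<^sup>2))\<^sup>2 * (\<Sum>i<K. u i * p i)) \<le> 1"
proof -
  define S where "S = (\<Sum>j<K. (p j)\<^sup>2)"
  define W where "W = (\<Sum>i<K. u i * p i)"
  have "0 < K" using assms(4) by (cases K) auto
  then have "0 < S" unfolding S_def using assms by (intro sum_squares_pos[of 0]) auto
  have "0 \<le> W" unfolding W_def using assms by (intro sum_nonneg) (simp add: less_imp_le)
  have "(\<Sum>a<K. p a * (p a * c a / S)\<^sup>2 * W) \<le> (\<Sum>a<K. (p a)^3 / S\<^sup>2 * W)"
  proof (rule sum_mono)
    fix a assume "a \<in> {..<K}"
    then have "(c a)\<^sup>2 \<le> 1" "0 < p a" using assms by (auto simp: abs_square_le_1)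
    then have "p a * (p a * c a / S)\<^sup>2 \<le> (p a)^3 / S\<^sup>2"
      by (simp add: power_mult_distrib power_divide divide_right_mono mult_left_le
          power3_eq_cube power2_eq_square)
    then show "p a * (p a * c a / S)\<^sup>2 * W \<le> (p a)^3 / S\<^sup>2 * W"
      using \<open>0 \<le> W\<close> by (rule mult_right_mono)
  qed
  also have "\<dots> = W * (\<Sum>a<K. (p a)^3) / S\<^sup>2"
    by (simp add: sum_distrib_left sum_divide_distrib mult.commute)
  also have "\<dots> \<le> 1"
  proof -
    have "W * (\<Sum>a<K. (p a)^3) = (\<Sum>i<K. u i * (\<Sum>a<K. (p a)\<^sup>2 * (p i * p a)))"
      unfolding W_def sum_distrib_left sum_distrib_right
      by (subst sum.swap) (simp add: power3_eq_cube power2_eq_square algebra_simps)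
    also have "\<dots> \<le> (\<Sum>i<K. u i * (\<Sum>a<K. (p a)\<^sup>2 * S))"
      using assms mult_le_sum_squares[of _ K _ p]
      by (intro sum_mono mult_left_mono) (auto simp: S_def)
    also have "\<dots> = S\<^sup>2"
      using assms by (simp add: S_def power2_eq_square flip: sum_distrib_left sum_distrib_right)
    finally show ?thesis using \<open>0 < S\<close> by simp
  qed
  finally show ?thesis by (simp add: S_def W_def)
qed

lemma expected_potential_update_le:
  assumes "0 < \<eta>" "\<eta> < 1" "\<forall>j<K. 0 < p j" "(\<Sum>j<K. p j) = 1" "\<forall>j<K. \<bar>c j\<bar> \<le> 1"
    and "\<forall>j<K. 0 \<le> u j" "(\<Sum>j<K. u j) = 1"
  shows "(\<Sum>a<K. p a * log_barrier_potential K u (lb_update \<eta> K p a (c a)))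
      \<le> log_barrier_potential K u p - \<eta> * (\<Sum>a<K. p a * c a) + \<eta> * (\<Sum>i<K. u i * c i)
        + 2 * \<eta>\<^sup>2 / (1 - \<eta>)"
proof -
  define \<Phi> where "\<Phi> = log_barrier_potential K u p"
  define C where "C = \<eta>\<^sup>2 / (1 - \<eta>)"
  define V where "V a = p a * (p a * c a / (\<Sum>j<K. (p j)\<^sup>2))\<^sup>2 * (\<Sum>i<K. u i * p i)" for a
  have "0 \<le> C" using assms by (simp add: C_def)
  have "(\<Sum>a<K. p a * log_barrier_potential K u (lb_update \<eta> K p a (c a)))
      \<le> (\<Sum>a<K. p a * (\<Phi> + \<eta> * (u a * c a / p a - c a)
          + C * (u a / p a + (p a * c a / (\<Sum>j<K. (p j)\<^sup>2))\<^sup>2 * (\<Sum>i<K. u i * p i))))"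
    unfolding \<Phi>_def C_def using assms
    by (intro sum_mono mult_left_mono lb_update_potential_le) (auto simp: less_imp_le)
  also have "\<dots> = (\<Sum>a<K. \<Phi> * p a + \<eta> * (u a * c a) - \<eta> * (p a * c a) + C * (u a + V a))"
    using assms by (intro sum.cong) (auto simp: V_def field_simps)
  also have "\<dots> = \<Phi> - \<eta> * (\<Sum>a<K. p a * c a) + \<eta> * (\<Sum>i<K. u i * c i) + C * (1 + (\<Sum>a<K. V a))"
    using assms by (simp add: sum.distrib sum_subtractf flip: sum_distrib_left sum_distrib_right)
  also have "\<dots> \<le> \<Phi> - \<eta> * (\<Sum>a<K. p a * c a) + \<eta> * (\<Sum>i<K. u i * c i) + 2 * C"
  proof -
    have "(\<Sum>a<K. V a) \<le> 1" unfolding V_def using assms by (intro variance_term_le_one) auto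
    then have "C * (1 + (\<Sum>a<K. V a)) \<le> C * 2" using \<open>0 \<le> C\<close> by (intro mult_left_mono) auto
    then show ?thesis by simp
  qed
  finally show ?thesis by (simp add: \<Phi>_def C_def)
qed

lemma histories_0: "histories K 0 = {[]}"
  by (auto simp: histories_def)

lemma sum_histories_Suc:
  "(\<Sum>h\<in>histories K (Suc n). f h) = (\<Sum>h\<in>histories K n. \<Sum>a<K. f (a # h))"
proof -
  have eq: "histories K (Suc n) = (\<lambda>(a, h). a # h) ` ({..<K} \<times> histories K n)"
    by (auto simp: histories_def length_Suc_conv image_iff)
  have inj: "inj_on (\<lambda>(a, h). a # h) ({..<K} \<times> histories K n)"
    by (auto simp: inj_on_def)
  have "(\<Sum>h\<in>histories K (Suc n). f h) = (\<Sum>(a, h)\<in>{..<K} \<times> histories K n. f (a # h))"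
    unfolding eq by (subst sum.reindex[OF inj]) (simp add: case_prod_beta)
  also have "\<dots> = (\<Sum>a<K. \<Sum>h\<in>histories K n. f (a # h))"
    by (rule sum.cartesian_product[symmetric])
  also have "\<dots> = (\<Sum>h\<in>histories K n. \<Sum>a<K. f (a # h))"
    by (rule sum.swap)
  finally show ?thesis .
qed

text \<open>The comparator: the point mass at \<open>istar\<close> mixed with weight \<open>1/T\<close> into the uniform
  distribution, so that its potential relative to the uniform start is at most \<open>K ln T\<close>
  while its loss exceeds that of \<open>istar\<close> by at most \<open>2/T\<close> per round.\<close>
definition smoothed_comparator :: "nat \<Rightarrow> nat \<Rightarrow> nat \<Rightarrow> nat \<Rightarrow> real" where
  "smoothed_comparator K T istar i = 1 / (real T * real K) + (if i = istar then 1 - 1 / real T else 0)"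

context
  fixes K T istar :: nat
  assumes K: "K \<ge> 1" and T: "T \<ge> 1" and istar: "istar < K"
begin

lemma smoothed_comparator_ge: "1 / (real T * real K) \<le> smoothed_comparator K T istar i"
  using T by (simp add: smoothed_comparator_def)

lemma smoothed_comparator_pos: "0 < smoothed_comparator K T istar i"
  using smoothed_comparator_ge[of i] K T by (smt (verit) divide_pos_pos of_nat_0_less_iff
      less_le_trans mult_pos_pos zero_less_one)

lemma sum_smoothed_comparator: "(\<Sum>i<K. smoothed_comparator K T istar i) = 1"
proof -
  have "(\<Sum>i<K. smoothed_comparator K T istar i) = real K * (1 / (real T * real K)) + (1 - 1 / real T)"
    using istar by (simp add: smoothed_comparator_def sum.distrib)
  also have "\<dots> = 1" using K T by (simp add: field_simps)
  finally show ?thesis .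
qed

lemma smoothed_comparator_loss_le:
  assumes "\<forall>i<K. \<bar>c i\<bar> \<le> 1"
  shows "(\<Sum>i<K. smoothed_comparator K T istar i * c i) - c istar \<le> 2 / real T"
proof -
  have "smoothed_comparator K T istar i * c i
      = c i / (real T * real K) + (if i = istar then (1 - 1 / real T) * c istar else 0)" for i
    by (simp add: smoothed_comparator_def algebra_simps)
  then have "(\<Sum>i<K. smoothed_comparator K T istar i * c i) - c istar
      = (\<Sum>i<K. c i) / (real T * real K) + (1 / real T) * (- c istar)"
    using istar by (simp add: sum.distrib sum_divide_distrib algebra_simps)
  also have "\<dots> \<le> real K / (real T * real K) + (1 / real T) * 1"
  proof (intro add_mono divide_right_mono mult_left_mono)
    show "(\<Sum>i<K. c i) \<le> real K"
      using sum_mono[of "{..<K}" c "\<lambda>_. 1"] assms by (auto simp: abs_le_iff)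
  qed (use assms istar in \<open>auto simp: abs_le_iff\<close>)
  also have "\<dots> = 2 / real T" using K by simp
  finally show ?thesis .
qed

lemma potential_smoothed_comparator_le:
  "log_barrier_potential K (smoothed_comparator K T istar) (\<lambda>_. 1 / real K)
     - (\<Sum>i<K. 1 + ln (smoothed_comparator K T istar i)) \<le> real K * ln (real T)"
proof -
  let ?u = "smoothed_comparator K T istar"
  have "ln (1 / (real T * real K)) \<le> ln (?u i)" for i
    using smoothed_comparator_ge smoothed_comparator_pos K T by (subst ln_le_cancel_iff) auto
  then have "(\<Sum>i<K. 1 + ln (1 / (real T * real K))) \<le> (\<Sum>i<K. 1 + ln (?u i))"
    by (intro sum_mono) simp
  moreover have "log_barrier_potential K ?u (\<lambda>_. 1 / real K)
      = (\<Sum>i<K. ?u i) * real K - real K * ln (real K)"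
    using K by (simp add: log_barrier_potential_def sum_subtractf ln_div sum_distrib_right)
  ultimately show ?thesis
    using K T sum_smoothed_comparator by (simp add: ln_div ln_mult algebra_simps)
qed

end

context
  fixes l :: "nat \<Rightarrow> nat \<Rightarrow> real" and \<eta> :: real and K T :: nat
  assumes eta: "0 < \<eta>" "\<eta> < 1" and K: "K \<ge> 1"
    and loss_bounded: "\<And>t i. 1 \<le> t \<Longrightarrow> t \<le> T \<Longrightarrow> i < K \<Longrightarrow> \<bar>l t i\<bar> \<le> 1"
begin

lemma lbprod_simplex:
  assumes "set h \<subseteq> {..<K}" "length h \<le> T"
  shows "(\<forall>i<K. 0 < lbprod l \<eta> K h i) \<and> (\<Sum>i<K. lbprod l \<eta> K h i) = 1"
  using assms
proof (induction h)
  case Nil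
  then show ?case using K by simp
next
  case (Cons a h)
  then have "a < K" "\<bar>l (Suc (length h)) a\<bar> \<le> 1"
    and "\<forall>i<K. 0 < lbprod l \<eta> K h i" "(\<Sum>i<K. lbprod l \<eta> K h i) = 1"
    using loss_bounded by auto
  then show ?case unfolding lbprod_Cons using lb_update_pos[OF eta] sum_lb_update by simp
qed

lemma hist_prob_pos: "set h \<subseteq> {..<K} \<Longrightarrow> length h \<le> T \<Longrightarrow> 0 < hist_prob l \<eta> K h"
  by (induction h) (use lbprod_simplex in auto)

lemma sum_hist_prob: "n \<le> T \<Longrightarrow> (\<Sum>h\<in>histories K n. hist_prob l \<eta> K h) = 1"
proof (induction n)
  case 0
  then show ?case by (simp add: histories_0)
next
  case (Suc n)
  have "(\<Sum>h\<in>histories K (Suc n). hist_prob l \<eta> K h)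
      = (\<Sum>h\<in>histories K n. hist_prob l \<eta> K h * (\<Sum>a<K. lbprod l \<eta> K h a))"
    by (simp add: sum_histories_Suc sum_distrib_left)
  also have "\<dots> = (\<Sum>h\<in>histories K n. hist_prob l \<eta> K h)"
    using lbprod_simplex Suc.prems by (intro sum.cong) (auto simp: histories_def)
  finally show ?case using Suc by simp
qed

definition expected_potential :: "(nat \<Rightarrow> real) \<Rightarrow> nat \<Rightarrow> real" where
  "expected_potential u n =
     (\<Sum>h\<in>histories K n. hist_prob l \<eta> K h * log_barrier_potential K u (lbprod l \<eta> K h))"

definition expected_loss :: "nat \<Rightarrow> real" where
  "expected_loss n =
     (\<Sum>h\<in>histories K n. hist_prob l \<eta> K h * (\<Sum>a<K. lbprod l \<eta> K h a * l (Suc n) a))"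

lemma exp_regret_round_Suc:
  assumes "n < T"
  shows "exp_regret_round l \<eta> K (Suc n) istar = expected_loss n - l (Suc n) istar"
proof -
  have "(\<Sum>a<K. hist_prob l \<eta> K h * lbprod l \<eta> K h a * (l (Suc n) a - l (Suc n) istar))
      = hist_prob l \<eta> K h * (\<Sum>a<K. lbprod l \<eta> K h a * l (Suc n) a)
        - l (Suc n) istar * hist_prob l \<eta> K h" if "h \<in> histories K n" for h
  proof -
    have "(\<Sum>a<K. lbprod l \<eta> K h a) = 1"
      using lbprod_simplex that assms by (auto simp: histories_def)
    moreover have "(\<Sum>a<K. hist_prob l \<eta> K h * lbprod l \<eta> K h a * (l (Suc n) a - l (Suc n) istar))
        = hist_prob l \<eta> K h * (\<Sum>a<K. lbprod l \<eta> K h a * l (Suc n) a)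
          - l (Suc n) istar * hist_prob l \<eta> K h * (\<Sum>a<K. lbprod l \<eta> K h a)"
      by (simp add: sum_distrib_left sum_subtractf algebra_simps)
    ultimately show ?thesis by simp
  qed
  then have "exp_regret_round l \<eta> K (Suc n) istar
      = expected_loss n - l (Suc n) istar * (\<Sum>h\<in>histories K n. hist_prob l \<eta> K h)"
    by (simp add: exp_regret_round_def expected_loss_def sum_subtractf sum_distrib_left)
  then show ?thesis using sum_hist_prob assms by simp
qed

lemma expected_potential_Suc_le:
  assumes "\<forall>j<K. 0 \<le> u j" "(\<Sum>j<K. u j) = 1" "n < T"
  shows "expected_potential u (Suc n)
      \<le> expected_potential u n - \<eta> * (expected_loss n - (\<Sum>i<K. u i * l (Suc n) i))
        + 2 * \<eta>\<^sup>2 / (1 - \<eta>)"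
proof -
  define c where "c = 2 * \<eta>\<^sup>2 / (1 - \<eta>)"
  define \<Phi> where "\<Phi> h = log_barrier_potential K u (lbprod l \<eta> K h)" for h
  define L where "L h = (\<Sum>a<K. lbprod l \<eta> K h a * l (Suc n) a)" for h
  define b where "b = \<eta> * (\<Sum>i<K. u i * l (Suc n) i) + c"
  have step: "(\<Sum>a<K. lbprod l \<eta> K h a * \<Phi> (a # h))
      \<le> \<Phi> h - \<eta> * L h + b" if "h \<in> histories K n" for h
  proof -
    have h: "set h \<subseteq> {..<K}" "length h = n" using that by (auto simp: histories_def)
    have "\<forall>j<K. \<bar>l (Suc n) j\<bar> \<le> 1" using loss_bounded assms by auto
    then show ?thesis
      unfolding \<Phi>_def L_def b_def c_def lbprod_Cons add.assoc[symmetric]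
      using expected_potential_update_le[OF eta _ _ _ assms(1,2), of "lbprod l \<eta> K h" "l (Suc n)"]
        lbprod_simplex[OF h(1)] h assms
      by simp
  qed
  have "expected_potential u (Suc n)
      = (\<Sum>h\<in>histories K n. hist_prob l \<eta> K h * (\<Sum>a<K. lbprod l \<eta> K h a * \<Phi> (a # h)))"
    by (simp add: expected_potential_def \<Phi>_def sum_histories_Suc sum_distrib_left mult.assoc)
  also have "\<dots> \<le> (\<Sum>h\<in>histories K n.
      hist_prob l \<eta> K h * (\<Phi> h - \<eta> * L h + b))"
    using step hist_prob_pos assms
    by (intro sum_mono mult_left_mono) (auto simp: histories_def less_imp_le)
  also have "\<dots> = expected_potential u n - \<eta> * expected_loss n
      + b * (\<Sum>h\<in>histories K n. hist_prob l \<eta> K h)"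
    by (simp add: expected_potential_def expected_loss_def \<Phi>_def L_def algebra_simps
        sum.distrib sum_subtractf sum_distrib_left sum_distrib_right)
  also have "\<dots> = expected_potential u n - \<eta> * (expected_loss n - (\<Sum>i<K. u i * l (Suc n) i)) + c"
    using sum_hist_prob assms by (simp add: b_def algebra_simps)
  finally show ?thesis by (simp add: c_def)
qed

lemma lbprod_regret_le:
  assumes T: "T \<ge> 1" and istar: "istar < K"
  shows "(\<Sum>t=1..T. exp_regret_round l \<eta> K t istar)
      \<le> 2 + real K * ln (real T) / \<eta> + 2 * \<eta> * real T / (1 - \<eta>)"
proof -
  define u where "u = smoothed_comparator K T istar"
  define c where "c = 2 * \<eta>\<^sup>2 / (1 - \<eta>)"
  define R where "R n = expected_loss n - (\<Sum>i<K. u i * l (Suc n) i)" for n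
  have u_pos: "\<forall>j<K. 0 < u j" and u_sum: "(\<Sum>j<K. u j) = 1"
    unfolding u_def using smoothed_comparator_pos sum_smoothed_comparator K T istar by auto
  then have u_nonneg: "\<forall>j<K. 0 \<le> u j" by (simp add: less_imp_le)
  have "\<eta> * (\<Sum>n<T. R n) \<le> (\<Sum>n<T. expected_potential u n - expected_potential u (Suc n) + c)"
    unfolding sum_distrib_left R_def c_def
    using expected_potential_Suc_le[OF u_nonneg u_sum] by (intro sum_mono) force
  also have "\<dots> = expected_potential u 0 - expected_potential u T + real T * c"
    by (simp add: sum.distrib sum_lessThan_telescope')
  finally have drift: "\<eta> * (\<Sum>n<T. R n) \<le> expected_potential u 0 - expected_potential u T + real T * c" .
  have "(\<Sum>i<K. 1 + ln (u i))
      = (\<Sum>h\<in>histories K T. hist_prob l \<eta> K h * (\<Sum>i<K. 1 + ln (u i)))"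
    using sum_hist_prob[of T] by (simp flip: sum_distrib_right)
  also have "\<dots> \<le> expected_potential u T"
    unfolding expected_potential_def using lbprod_simplex hist_prob_pos u_pos
    by (intro sum_mono mult_left_mono log_barrier_potential_ge)
      (auto simp: histories_def less_imp_le)
  finally have "expected_potential u 0 - expected_potential u T \<le> real K * ln (real T)"
    using potential_smoothed_comparator_le[OF K T istar]
    by (simp add: expected_potential_def histories_0 u_def)
  with drift have "\<eta> * (\<Sum>n<T. R n) \<le> real K * ln (real T) + real T * c" by linarith
  then have R: "(\<Sum>n<T. R n) \<le> real K * ln (real T) / \<eta> + 2 * \<eta> * real T / (1 - \<eta>)"
    using eta by (simp add: c_def field_simps power2_eq_square)
  have "(\<Sum>n<T. (\<Sum>i<K. u i * l (Suc n) i) - l (Suc n) istar) \<le> (\<Sum>n<T. 2 / real T)"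
    unfolding u_def using smoothed_comparator_loss_le[OF K T istar] loss_bounded
    by (intro sum_mono) auto
  also have "\<dots> = 2" using T by simp
  finally have comparator: "(\<Sum>n<T. (\<Sum>i<K. u i * l (Suc n) i) - l (Suc n) istar) \<le> 2" .
  have "(\<Sum>t=1..T. exp_regret_round l \<eta> K t istar) = (\<Sum>n<T. exp_regret_round l \<eta> K (Suc n) istar)"
    by (simp add: sum.atLeast1_atMost_eq)
  also have "\<dots> = (\<Sum>n<T. R n) + (\<Sum>n<T. (\<Sum>i<K. u i * l (Suc n) i) - l (Suc n) istar)"
    by (simp add: exp_regret_round_Suc R_def flip: sum.distrib)
  finally show ?thesis using R comparator by linarith
qed

end

theorem mainTheorem2:
  fixes l :: "nat \<Rightarrow> nat \<Rightarrow> real" and \<eta> :: real and K T :: nat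
  assumes "0 < \<eta>" and "\<eta> < 1" and "T \<ge> 1" and "K \<ge> 1"
    and "\<And>t i. 1 \<le> t \<Longrightarrow> t \<le> T \<Longrightarrow> i < K \<Longrightarrow> \<bar>l t i\<bar> \<le> 1"
  shows "(\<forall>h\<in>(\<Union>n<T. histories K n).
            (\<forall>i<K. lbprod l \<eta> K h i > 0) \<and> (\<Sum>i<K. lbprod l \<eta> K h i) = 1)
       \<and> (\<forall>istar<K. (\<Sum>t=1..T. exp_regret_round l \<eta> K t istar)
              \<le> 2 + real K * ln (real T) / \<eta> + 2 * \<eta> * real T / (1 - \<eta>))"
proof -
  have "(\<forall>i<K. lbprod l \<eta> K h i > 0) \<and> (\<Sum>i<K. lbprod l \<eta> K h i) = 1"
    if "h \<in> (\<Union>n<T. histories K n)" for h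
    using that lbprod_simplex[of \<eta> K T l h] assms by (auto simp: histories_def)
  moreover have "(\<Sum>t=1..T. exp_regret_round l \<eta> K t istar)
      \<le> 2 + real K * ln (real T) / \<eta> + 2 * \<eta> * real T / (1 - \<eta>)" if "istar < K" for istar
    using that lbprod_regret_le[of \<eta> K T l istar] assms by blast
  ultimately show ?thesis by blast
qed

end
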